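(* Let $|p|<1$ and let $a,b,q,r$ be nonzero complex numbers such that all expressions below are well defined. For integers $n\ge j$ and $j\ge m$ define $$a_{nj}=\frac{(-1)^{n+j}\,\theta(ar^jq^j,\,br^jq^{-j};p)\,(arq^n,\,brq^{-n};r,p)_{n-1}}{(q;q,p)_{n-j}\,(arq^n,\,brq^{-n};r,p)_j\,(bq^{1-2n}/a;q,p)_{n-j}},$$ $$b_{jm}=\frac{(ar^mq^m,\,br^mq^{-m};r,p)_{j-m}}{(q,\,aq^{1+2m}/b;q,p)_{j-m}}\Big(-\frac abq^{1+2m}\Big)^{j-m}q^{2\binom{j-m}{2}}.$$ Then for all integers $m\le n$, $$\sum_{j=m}^n a_{nj}b_{jm}=\delta_{n,m}.$$
   Context: For $|p|<1$ and $x\neq 0$, $\theta(x;p)=(x;p)_\infty(p/x;p)_\infty$ where $(x;p)_\infty=\prod_{k\ge 0}(1-xp^k)$, and $\theta(x_1,\dots,x_m;p)=\prod_{i=1}^m\theta(x_i;p)$. For $a\ne0$ and an integer $n$: $(a;q,p)_n=\prod_{k=0}^{n-1}\theta(aq^k;p)$ for $n\ge1$, $(a;q,p)_0=1$, $(a;q,p)_n=1/\prod_{k=0}^{-n-1}\theta(aq^{n+k};p)$ for $n\le-1$; $(a_1,\dots,a_m;q,p)_n=\prod_i(a_i;q,p)_n$. $\delta_{n,m}$ is the Kronecker delta. *)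

theory Defs
  imports "HOL-Analysis.Analysis"
begin

definition qpoch_inf :: "complex \<Rightarrow> complex \<Rightarrow> complex" where
  "qpoch_inf x p = prodinf (\<lambda>k. 1 - x * p ^ k)"

definition theta :: "complex \<Rightarrow> complex \<Rightarrow> complex" where
  "theta x p = qpoch_inf x p * qpoch_inf (p / x) p"

definition epoch :: "complex \<Rightarrow> complex \<Rightarrow> complex \<Rightarrow> int \<Rightarrow> complex" where
  "epoch a q p n =
     (if n \<ge> 0 then (\<Prod>k<nat n. theta (a * q ^ k) p)
      else 1 / (\<Prod>k<nat (- n). theta (a * q powi (n + int k)) p))"

text \<open>(a;q,p)_n is well defined (for n < 0 the reciprocal must not be 1/0).\<close>
definition epoch_defined :: "complex \<Rightarrow> complex \<Rightarrow> complex \<Rightarrow> int \<Rightarrow> bool" where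
  "epoch_defined a q p n \<longleftrightarrow>
     (n < 0 \<longrightarrow> (\<Prod>k<nat (- n). theta (a * q powi (n + int k)) p) \<noteq> 0)"

definition coeffA :: "complex \<Rightarrow> complex \<Rightarrow> complex \<Rightarrow> complex \<Rightarrow> complex \<Rightarrow> int \<Rightarrow> int \<Rightarrow> complex" where
  "coeffA a b q r p n j =
     (-1) powi (n + j) * theta (a * r powi j * q powi j) p * theta (b * r powi j * q powi (- j)) p
       * epoch (a * r * q powi n) r p (n - 1) * epoch (b * r * q powi (- n)) r p (n - 1)
     / (epoch q q p (n - j) * epoch (a * r * q powi n) r p j * epoch (b * r * q powi (- n)) r p j
        * epoch (b * q powi (1 - 2 * n) / a) q p (n - j))"

definition coeffB :: "complex \<Rightarrow> complex \<Rightarrow> complex \<Rightarrow> complex \<Rightarrow> complex \<Rightarrow> int \<Rightarrow> int \<Rightarrow> complex" where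
  "coeffB a b q r p j m =
     epoch (a * r powi m * q powi m) r p (j - m) * epoch (b * r powi m * q powi (- m)) r p (j - m)
     / (epoch q q p (j - m) * epoch (a * q powi (1 + 2 * m) / b) q p (j - m))
     * (- (a / b) * q powi (1 + 2 * m)) ^ nat (j - m)
     * q ^ (2 * (nat (j - m) choose 2))"

end

theory Submission
  imports Defs "HOL-Complex_Analysis.Complex_Analysis"
begin

text \<open>Write j = m + k and N = n - m.  Reading the factorials (q;q,p)_{n-j} and
  (b q^{1-2n}/a;q,p)_{n-j} backwards turns a_{nj} b_{jm} into a factor independent of k times the
  k-th term of the elliptic bibasic summation with parameters a r^m q^m, b r^m q^{-m} and
  c = q^{-N}.  That summation telescopes, each step being an instance of a three-term theta
  identity, and its closed form contains (cq;q,p)_N, which vanishes for N > 0 because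
  theta(c q^N) = theta(1) = 0; for N = 0 the single term is 1.

  The three-term identity is a reparametrisation of Weierstrass' addition formula, proved in the
  classical way: as functions of x, the difference F of its two sides and G(x) = theta(x/u) theta(xu)
  acquire the same factor x^{-2} under x \<mapsto> px, and for generic u the zeros of G are simple
  and zeros of F.  So F/G is holomorphic on the punctured plane and invariant under x \<mapsto> px,
  hence bounded and constant by Liouville's theorem; it vanishes at x = y.  Continuity in u
  removes the genericity assumption.\<close>

section \<open>The theta function\<close>

lemma qpoch_inf_has_prod:
  assumes "norm p < 1"
  shows "(\<lambda>k. 1 - x * p ^ k) has_prod qpoch_inf x p"
proof -
  have "summable (\<lambda>k. norm x * norm p ^ k)"
    using assms by (intro summable_mult summable_geometric) auto
  hence "abs_convergent_prod (\<lambda>k. 1 - x * p ^ k)"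
    unfolding abs_convergent_prod_conv_summable by (simp add: norm_mult norm_power)
  thus ?thesis
    unfolding qpoch_inf_def by (intro convergent_prod_has_prod abs_convergent_prod_imp_convergent_prod)
qed

lemma qpoch_inf_shift:
  assumes "norm p < 1"
  shows "qpoch_inf x p = (1 - x) * qpoch_inf (x * p) p"
proof (cases "x = 1")
  case True
  have "qpoch_inf x p = 0"
    using has_prod_eq_0_iff[OF qpoch_inf_has_prod[OF assms, of x]] True
    by (metis (no_types, lifting) diff_self mult_1 power_0 rangeI)
  thus ?thesis using True by simp
next
  case False
  have "(\<lambda>k. 1 - x * p ^ Suc k) has_prod qpoch_inf (x * p) p"
    using qpoch_inf_has_prod[OF assms, of "x * p"] by (simp add: mult_ac)
  hence "(\<lambda>k. 1 - x * p ^ k) has_prod (qpoch_inf (x * p) p * (1 - x))"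
    using has_prod_Suc_iff[of "\<lambda>k. 1 - x * p ^ k"] False by simp
  thus ?thesis using has_prod_unique2[OF qpoch_inf_has_prod[OF assms, of x]] by (simp add: mult_ac)
qed

lemma qpoch_inf_eq_0_iff:
  assumes "norm p < 1"
  shows "qpoch_inf x p = 0 \<longleftrightarrow> (\<exists>k. x * p ^ k = 1)"
  using has_prod_eq_0_iff[OF qpoch_inf_has_prod[OF assms, of x]]
  by (auto simp: eq_commute[of 0] eq_commute[of 1])

lemma qpoch_inf_p_nonzero:
  assumes "norm p < 1"
  shows "qpoch_inf p p \<noteq> 0"
proof
  assume "qpoch_inf p p = 0"
  then obtain k where k: "p * p ^ k = 1" using qpoch_inf_eq_0_iff[OF assms] by auto
  have "norm (p * p ^ k) \<le> norm p"
    using assms by (simp add: norm_mult norm_power mult_left_le power_le_one)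
  thus False using k assms by simp
qed

lemma qpoch_inf_0: "qpoch_inf x 0 = 1 - x"
  using qpoch_inf_shift[of 0 x] by (simp add: qpoch_inf_def)

lemma holomorphic_on_qpoch_inf:
  assumes "norm p < 1" "p \<noteq> 0" "g holomorphic_on A"
  shows "(\<lambda>x. qpoch_inf (g x) p) holomorphic_on A"
proof -
  interpret W: weierstrass_product "\<lambda>n. inverse (p ^ n)" "\<lambda>_. 0"
  proof
    show "\<And>n. inverse (p ^ n) \<noteq> 0" using assms by simp
    have "filterlim (\<lambda>n. (inverse p) ^ n) at_infinity sequentially"
      using assms by (intro filterlim_realpow_sequentially_gt1) (simp add: norm_inverse one_less_inverse)
    thus "filterlim (\<lambda>n. inverse (p ^ n)) at_infinity sequentially"
      by (simp add: power_inverse)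
    fix r :: real assume "r > 0"
    have "summable (\<lambda>n. r * norm p ^ n)"
      using assms by (intro summable_mult summable_geometric) auto
    thus "summable (\<lambda>n. (r / norm (inverse (p ^ n))) ^ Suc 0)"
      by (simp add: norm_inverse norm_power divide_inverse)
  qed
  have "W.f = (\<lambda>x. qpoch_inf x p)"
    unfolding W.f_def qpoch_inf_def weierstrass_factor_def by (simp add: divide_inverse)
  hence "((\<lambda>x. qpoch_inf x p) \<circ> g) holomorphic_on A"
    using holomorphic_on_compose[OF assms(3) W.holomorphic] by simp
  thus ?thesis by (simp add: o_def)
qed

lemma holomorphic_on_theta:
  assumes "norm p < 1" "p \<noteq> 0" "g holomorphic_on A" "\<And>x. x \<in> A \<Longrightarrow> g x \<noteq> 0"
  shows "(\<lambda>x. theta (g x) p) holomorphic_on A"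
proof -
  have "(\<lambda>x. p / g x) holomorphic_on A"
    using assms by (intro holomorphic_intros) auto
  thus ?thesis unfolding theta_def
    by (intro holomorphic_on_mult holomorphic_on_qpoch_inf assms)
qed

lemma theta_factor:
  assumes "norm p < 1"
  shows "theta x p = (1 - x) * (qpoch_inf (x * p) p * qpoch_inf (p / x) p)"
  unfolding theta_def using qpoch_inf_shift[OF assms, of x] by simp

lemma theta_1: "norm p < 1 \<Longrightarrow> theta 1 p = 0"
  using theta_factor[of p 1] by simp

lemma theta_0: "theta x 0 = 1 - x"
  unfolding theta_def by (simp add: qpoch_inf_0)

lemma theta_inverse:
  assumes "norm p < 1" "x \<noteq> 0"
  shows "theta (1 / x) p = - (1 / x) * theta x p"
proof -
  have "theta (1 / x) p = (1 - 1 / x) * qpoch_inf (p / x) p * qpoch_inf (x * p) p"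
    unfolding theta_def using qpoch_inf_shift[OF assms(1), of "1 / x"] assms(2)
    by (simp add: mult_ac)
  also have "\<dots> = - (1 / x) * ((1 - x) * (qpoch_inf (x * p) p * qpoch_inf (p / x) p))"
    using assms(2) by (simp add: field_simps)
  finally show ?thesis using theta_factor[OF assms(1), of x] by simp
qed

lemma theta_mult_p:
  assumes "norm p < 1" "p \<noteq> 0" "x \<noteq> 0"
  shows "theta (p * x) p = - (1 / x) * theta x p"
proof -
  have "theta (p * x) p = qpoch_inf (x * p) p * ((1 - 1 / x) * qpoch_inf (p / x) p)"
    unfolding theta_def using qpoch_inf_shift[OF assms(1), of "1 / x"] assms
    by (simp add: mult_ac)
  also have "\<dots> = - (1 / x) * ((1 - x) * (qpoch_inf (x * p) p * qpoch_inf (p / x) p))"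
    using assms by (simp add: field_simps)
  finally show ?thesis using theta_factor[OF assms(1), of x] by simp
qed

lemma theta_mult_p_powi:
  assumes "norm p < 1" "p \<noteq> 0"
  shows "\<exists>c l. c \<noteq> 0 \<and> (\<forall>x. x \<noteq> 0 \<longrightarrow> theta (p powi k * x) p = c * x powi l * theta x p)"
proof (induction k rule: int_induct[where k = 0])
  case base
  show ?case by (rule exI[of _ 1], rule exI[of _ 0]) simp
next
  case (step1 i)
  then obtain c l where cl: "c \<noteq> 0" "\<And>x. x \<noteq> 0 \<Longrightarrow> theta (p powi i * x) p = c * x powi l * theta x p"
    by blast
  have "theta (p powi (i + 1) * x) p = (- c / p powi i) * x powi (l - 1) * theta x p" if "x \<noteq> 0" for x
  proof -
    have "theta (p powi (i + 1) * x) p = theta (p * (p powi i * x)) p"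
      using assms by (simp add: power_int_add mult_ac)
    also have "\<dots> = - (1 / (p powi i * x)) * theta (p powi i * x) p"
      using assms that by (intro theta_mult_p) auto
    also have "\<dots> = (- c / p powi i) * x powi (l - 1) * theta x p"
      using cl(2)[OF that] that assms by (simp add: power_int_diff field_simps)
    finally show ?thesis .
  qed
  moreover have "- c / p powi i \<noteq> 0" using cl assms by simp
  ultimately show ?case by blast
next
  case (step2 i)
  then obtain c l where cl: "c \<noteq> 0" "\<And>x. x \<noteq> 0 \<Longrightarrow> theta (p powi i * x) p = c * x powi l * theta x p"
    by blast
  have "theta (p powi (i - 1) * x) p = (- c * p powi (i - 1)) * x powi (l + 1) * theta x p" if "x \<noteq> 0" for x
  proof -
    have "theta (p powi i * x) p = theta (p * (p powi (i - 1) * x)) p"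
      using assms by (simp add: power_int_diff mult_ac)
    also have "\<dots> = - (1 / (p powi (i - 1) * x)) * theta (p powi (i - 1) * x) p"
      using assms that by (intro theta_mult_p) auto
    finally have "theta (p powi (i - 1) * x) p = - (p powi (i - 1) * x) * theta (p powi i * x) p"
      using assms that by (simp add: field_simps)
    also have "\<dots> = (- c * p powi (i - 1)) * x powi (l + 1) * theta x p"
      using cl(2)[OF that] that assms by (simp add: power_int_add field_simps)
    finally show ?thesis .
  qed
  moreover have "- c * p powi (i - 1) \<noteq> 0" using cl assms by simp
  ultimately show ?case by blast
qed

lemma theta_pair_mult_p:
  assumes "norm p < 1" "p \<noteq> 0" "x \<noteq> 0" "c \<noteq> 0"
  shows "theta (p * x * c) p * theta (p * x / c) p = (1 / x ^ 2) * (theta (x * c) p * theta (x / c) p)"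
proof -
  have "theta (p * x * c) p = - (1 / (x * c)) * theta (x * c) p"
    using theta_mult_p[of p "x * c"] assms by (simp add: mult_ac)
  moreover have "theta (p * x / c) p = - (c / x) * theta (x / c) p"
    using theta_mult_p[of p "x / c"] assms by (simp add: mult_ac)
  ultimately have "theta (p * x * c) p * theta (p * x / c) p =
      (- (1 / (x * c)) * theta (x * c) p) * (- (c / x) * theta (x / c) p)"
    by simp
  also have "\<dots> = (1 / x ^ 2) * (theta (x * c) p * theta (x / c) p)"
    using assms by (simp add: field_simps power2_eq_square)
  finally show ?thesis .
qed

lemma theta_nonzero:
  assumes "norm p < 1" "x \<noteq> 0" "\<And>k::int. x \<noteq> p powi k"
  shows "theta x p \<noteq> 0"
proof
  assume "theta x p = 0"
  hence "qpoch_inf x p = 0 \<or> qpoch_inf (p / x) p = 0" unfolding theta_def by simp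
  thus False
  proof
    assume "qpoch_inf x p = 0"
    then obtain k where k: "x * p ^ k = 1" using qpoch_inf_eq_0_iff[OF assms(1)] by auto
    hence "p \<noteq> 0 \<or> k = 0" by (cases k) auto
    hence "x = p powi (- int k)" using k by (auto simp: power_int_minus field_simps)
    thus False using assms(3) by blast
  next
    assume "qpoch_inf (p / x) p = 0"
    then obtain k where k: "p / x * p ^ k = 1" using qpoch_inf_eq_0_iff[OF assms(1)] by auto
    hence "x = p powi (int k + 1)" using assms(2)
      by (auto simp: power_int_add field_simps)
    thus False using assms(3) by blast
  qed
qed

section \<open>Quasi-periodic holomorphic functions on the punctured plane\<close>

lemma mult_periodic_powi:
  fixes p x :: complex
  assumes "p \<noteq> 0" "\<And>x. x \<noteq> 0 \<Longrightarrow> h (p * x) = h x" "x \<noteq> 0"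
  shows "h (p powi k * x) = h x"
proof (induction k rule: int_induct[where k = 0])
  case base thus ?case by simp
next
  case (step1 i)
  have "h (p powi (i + 1) * x) = h (p * (p powi i * x))"
    using assms by (simp add: power_int_add mult_ac)
  also have "\<dots> = h (p powi i * x)" using assms by (intro assms(2)) auto
  finally show ?case using step1 by simp
next
  case (step2 i)
  have "h (p powi i * x) = h (p * (p powi (i - 1) * x))"
    using assms by (simp add: power_int_diff mult_ac)
  also have "\<dots> = h (p powi (i - 1) * x)" using assms by (intro assms(2)) auto
  finally show ?case using step2 by simp
qed

lemma exists_powi_in_annulus:
  fixes p x :: complex
  assumes "0 < norm p" "norm p < 1" "x \<noteq> 0"
  shows "\<exists>k::int. norm p \<le> norm (p powi k * x) \<and> norm (p powi k * x) \<le> 1"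
proof -
  define L where "L = ln (norm p)"
  define X where "X = ln (norm x)"
  have L: "L < 0" using assms unfolding L_def by simp
  define k where "k = ceiling (- X / L)"
  have "real_of_int k * L \<le> (- X / L) * L"
    using L by (intro mult_right_mono_neg) (auto simp: k_def)
  hence upper: "real_of_int k * L + X \<le> 0" using L by simp
  have "real_of_int k < - X / L + 1" unfolding k_def by linarith
  hence "real_of_int k * L > (- X / L + 1) * L" using L by (simp add: mult_strict_right_mono_neg)
  moreover have "(- X / L + 1) * L = - X + L" using L by (simp add: field_simps)
  ultimately have lower: "L \<le> real_of_int k * L + X" by linarith
  have "norm (p powi k * x) = norm p powi k * norm x" by (simp add: norm_mult norm_power_int)
  also have "norm p powi k = exp (real_of_int k * L)"
    using assms by (simp add: powr_real_of_int'[symmetric] powr_def L_def)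
  also have "norm x = exp X" using assms by (simp add: X_def)
  finally have "norm (p powi k * x) = exp (real_of_int k * L + X)" by (simp add: exp_add)
  moreover have "norm p = exp L" using assms by (simp add: L_def)
  ultimately show ?thesis using upper lower by (intro exI[of _ k]) auto
qed

text \<open>Liouville's theorem, applied to \<open>h \<circ> exp\<close>, which is bounded because every orbit of
  \<open>x \<mapsto> p x\<close> meets the compact annulus \<open>norm p \<le> norm x \<le> 1\<close>.\<close>
lemma mult_periodic_holomorphic_const:
  assumes "0 < norm p" "norm p < 1" "h holomorphic_on (-{0})"
    and per: "\<And>x. x \<noteq> 0 \<Longrightarrow> h (p * x) = h x" and "x \<noteq> 0"
  shows "h x = h 1"
proof -
  define A where "A = {z::complex. norm p \<le> norm z \<and> norm z \<le> 1}"
  have "closed A" unfolding A_def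
    by (intro closed_Collect_conj closed_Collect_le continuous_intros)
  moreover have "bounded A" unfolding A_def bounded_iff by auto
  ultimately have "compact A" by (simp add: compact_eq_bounded_closed)
  moreover have "A \<subseteq> -{0}" using assms unfolding A_def by auto
  hence "continuous_on A h"
    using assms(3) holomorphic_on_imp_continuous_on holomorphic_on_subset by blast
  ultimately have "compact (h ` A)" by (metis compact_continuous_image)
  then obtain M where M: "\<And>z. z \<in> A \<Longrightarrow> norm (h z) \<le> M"
    using compact_imp_bounded bounded_iff by (metis image_eqI)
  define g where "g = (\<lambda>z. h (exp z))"
  have "g holomorphic_on UNIV"
  proof -
    have "(h \<circ> exp) holomorphic_on UNIV"
      by (rule holomorphic_on_compose) (auto intro!: holomorphic_intros holomorphic_on_subset[OF assms(3)])
    thus ?thesis by (simp add: g_def o_def)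
  qed
  moreover have "bounded (range g)"
  proof -
    have "norm (g z) \<le> M" for z
    proof -
      obtain k where "p powi k * exp z \<in> A"
        using exists_powi_in_annulus[OF assms(1,2), of "exp z"] unfolding A_def by auto
      hence "norm (h (p powi k * exp z)) \<le> M" by (rule M)
      moreover have "h (p powi k * exp z) = h (exp z)"
        using assms by (intro mult_periodic_powi[where h=h and p=p]) (auto simp: per)
      ultimately show ?thesis by (simp add: g_def)
    qed
    thus ?thesis unfolding bounded_iff by auto
  qed
  ultimately have "g constant_on UNIV" by (rule Liouville_theorem)
  hence "g (Ln x) = g 0" unfolding constant_on_def by auto
  thus ?thesis using assms by (simp add: g_def)
qed

definition lhospital_quotient :: "(complex \<Rightarrow> complex) \<Rightarrow> (complex \<Rightarrow> complex) \<Rightarrow> complex \<Rightarrow> complex"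
  where "lhospital_quotient F G x = (if G x \<noteq> 0 then F x / G x else deriv F x / deriv G x)"

lemma lhospital_quotient_differentiable_at_simple_zero:
  assumes S: "open S" "x0 \<in> S" and hol: "F holomorphic_on S" "K holomorphic_on S"
    and F0: "F x0 = 0" and K0: "K x0 \<noteq> 0" and G: "\<And>x. x \<in> S \<Longrightarrow> G x = (x - x0) * K x"
  shows "lhospital_quotient F G field_differentiable at x0"
proof -
  define T where "T = S \<inter> K -` (-{0})"
  have T: "open T" "x0 \<in> T" "T \<subseteq> S"
    using continuous_open_preimage[OF holomorphic_on_imp_continuous_on[OF hol(2)] S(1), of "-{0}"]
      S(2) K0 by (auto simp: T_def)
  define F1 where "F1 = (\<lambda>z. if z = x0 then deriv F x0 else (F z - F x0) / (z - x0))"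
  have "F1 holomorphic_on S" unfolding F1_def
    by (rule pole_lemma[OF hol(1)]) (simp add: S interior_open)
  hence F1K: "(\<lambda>x. F1 x / K x) holomorphic_on T"
    using T(3) by (intro holomorphic_on_divide holomorphic_on_subset[OF _ T(3)]
        holomorphic_on_subset[OF hol(2) T(3)]) (auto simp: T_def)
  have "deriv G x0 = K x0"
  proof -
    obtain k' where "(K has_field_derivative k') (at x0)"
      using hol(2) S holomorphic_on_imp_differentiable_at field_differentiable_def by blast
    hence "((\<lambda>x. (x - x0) * K x) has_field_derivative K x0) (at x0)"
      by (auto intro!: derivative_eq_intros)
    hence "(G has_field_derivative K x0) (at x0)"
      by (rule has_field_derivative_transform_within_open[OF _ S]) (simp add: G)
    thus ?thesis by (rule DERIV_imp_deriv)
  qed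
  hence "F1 x / K x = lhospital_quotient F G x" if "x \<in> T" for x
    using that G[of x] T F0 by (auto simp: F1_def T_def lhospital_quotient_def)
  hence "lhospital_quotient F G holomorphic_on T" by (rule holomorphic_transform[OF F1K])
  thus ?thesis using T holomorphic_on_imp_differentiable_at by blast
qed

lemma holomorphic_on_lhospital_quotient:
  assumes S: "open S" and hol: "F holomorphic_on S" "G holomorphic_on S"
    and simple_zeros: "\<And>x0. x0 \<in> S \<Longrightarrow> G x0 = 0 \<Longrightarrow>
       F x0 = 0 \<and> (\<exists>K. K holomorphic_on S \<and> K x0 \<noteq> 0 \<and> (\<forall>x\<in>S. G x = (x - x0) * K x))"
  shows "lhospital_quotient F G holomorphic_on S"
proof -
  have "lhospital_quotient F G field_differentiable at x0" if x0: "x0 \<in> S" for x0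
  proof (cases "G x0 = 0")
    case True
    then obtain K where "K holomorphic_on S" "K x0 \<noteq> 0" "\<And>x. x \<in> S \<Longrightarrow> G x = (x - x0) * K x"
      "F x0 = 0"
      using simple_zeros[OF x0] by blast
    thus ?thesis using lhospital_quotient_differentiable_at_simple_zero[OF S x0 hol(1)] by blast
  next
    case False
    define T where "T = S \<inter> G -` (-{0})"
    have T: "open T" "x0 \<in> T" "T \<subseteq> S"
      using continuous_open_preimage[OF holomorphic_on_imp_continuous_on[OF hol(2)] S, of "-{0}"]
        x0 False by (auto simp: T_def)
    have "(\<lambda>x. F x / G x) holomorphic_on T"
      using T(3) by (intro holomorphic_on_divide holomorphic_on_subset[OF hol(1)]
          holomorphic_on_subset[OF hol(2)]) (auto simp: T_def)
    hence "lhospital_quotient F G holomorphic_on T"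
      by (rule holomorphic_transform) (auto simp: lhospital_quotient_def T_def)
    thus ?thesis using T holomorphic_on_imp_differentiable_at by blast
  qed
  thus ?thesis using S by (simp add: holomorphic_on_open field_differentiable_def)
qed

lemma deriv_quasi_periodic_at_zero:
  assumes hol: "F holomorphic_on -{0}" "e holomorphic_on -{0}" and "p \<noteq> 0"
    and per: "\<And>z. z \<noteq> 0 \<Longrightarrow> F (p * z) = e z * F z" and x: "x \<noteq> 0" "F x = 0"
  shows "deriv F (p * x) * p = e x * deriv F x"
proof -
  have op: "open (-{0::complex})" by auto
  have dF: "(F has_field_derivative deriv F z) (at z)" if "z \<noteq> 0" for z
    using hol(1) op that holomorphic_derivI by blast
  have de: "(e has_field_derivative deriv e x) (at x)"
    using hol(2) op x holomorphic_derivI by blast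
  have "(F has_field_derivative deriv F (p * x)) (at (p * x))"
    using dF assms by simp
  moreover have "((\<lambda>z. p * z) has_field_derivative p) (at x)"
    by (auto intro!: derivative_eq_intros)
  ultimately have "((\<lambda>z. F (p * z)) has_field_derivative deriv F (p * x) * p) (at x)"
    by (rule DERIV_chain2)
  moreover have "((\<lambda>z. e z * F z) has_field_derivative e x * deriv F x) (at x)"
    using DERIV_mult'[OF de dF[OF x(1)]] x by simp
  hence "((\<lambda>z. F (p * z)) has_field_derivative e x * deriv F x) (at x)"
    by (rule has_field_derivative_transform_within_open[OF _ op]) (use x per in auto)
  ultimately show ?thesis using DERIV_unique by blast
qed

lemma lhospital_quotient_mult_periodic:
  assumes hol: "F holomorphic_on -{0}" "G holomorphic_on -{0}" "e holomorphic_on -{0}"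
    and "p \<noteq> 0" and e: "\<And>z. z \<noteq> 0 \<Longrightarrow> e z \<noteq> 0"
    and Fp: "\<And>z. z \<noteq> 0 \<Longrightarrow> F (p * z) = e z * F z"
    and Gp: "\<And>z. z \<noteq> 0 \<Longrightarrow> G (p * z) = e z * G z"
    and FG: "\<And>z. z \<noteq> 0 \<Longrightarrow> G z = 0 \<Longrightarrow> F z = 0" and "z \<noteq> 0"
  shows "lhospital_quotient F G (p * z) = lhospital_quotient F G z"
proof (cases "G z = 0")
  case True
  have "deriv F (p * z) * p = e z * deriv F z"
    by (rule deriv_quasi_periodic_at_zero[OF hol(1,3) \<open>p \<noteq> 0\<close> Fp]) (use FG True \<open>z \<noteq> 0\<close> in auto)
  hence "deriv F (p * z) = (e z / p) * deriv F z"
    using \<open>p \<noteq> 0\<close> by (simp add: field_simps)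
  moreover have "deriv G (p * z) * p = e z * deriv G z"
    by (rule deriv_quasi_periodic_at_zero[OF hol(2,3) \<open>p \<noteq> 0\<close> Gp]) (use True \<open>z \<noteq> 0\<close> in auto)
  hence "deriv G (p * z) = (e z / p) * deriv G z"
    using \<open>p \<noteq> 0\<close> by (simp add: field_simps)
  ultimately have "deriv F (p * z) / deriv G (p * z) = deriv F z / deriv G z"
    using \<open>p \<noteq> 0\<close> e[OF \<open>z \<noteq> 0\<close>] by simp
  thus ?thesis using True Gp[OF \<open>z \<noteq> 0\<close>] unfolding lhospital_quotient_def by simp
next
  case False
  thus ?thesis using Fp[OF \<open>z \<noteq> 0\<close>] Gp[OF \<open>z \<noteq> 0\<close>] e[OF \<open>z \<noteq> 0\<close>]
    unfolding lhospital_quotient_def by simp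
qed

text \<open>\<open>F / G\<close> extends to a holomorphic function invariant under \<open>x \<mapsto> p x\<close>, hence constant.\<close>
lemma quasi_periodic_eq_0:
  assumes p: "0 < norm p" "norm p < 1"
    and hol: "F holomorphic_on -{0}" "G holomorphic_on -{0}" "e holomorphic_on -{0}"
    and e: "\<And>z. z \<noteq> 0 \<Longrightarrow> e z \<noteq> 0"
    and Fp: "\<And>z. z \<noteq> 0 \<Longrightarrow> F (p * z) = e z * F z"
    and Gp: "\<And>z. z \<noteq> 0 \<Longrightarrow> G (p * z) = e z * G z"
    and simple_zeros: "\<And>x0. x0 \<noteq> 0 \<Longrightarrow> G x0 = 0 \<Longrightarrow>
       F x0 = 0 \<and> (\<exists>K. K holomorphic_on -{0} \<and> K x0 \<noteq> 0 \<and> (\<forall>x\<in>-{0}. G x = (x - x0) * K x))"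
    and y: "y \<noteq> 0" "F y = 0" "G y \<noteq> 0" and "x \<noteq> 0"
  shows "F x = 0"
proof -
  let ?h = "lhospital_quotient F G"
  have "?h holomorphic_on -{0}"
    by (rule holomorphic_on_lhospital_quotient) (use hol simple_zeros in auto)
  moreover have "?h (p * z) = ?h z" if "z \<noteq> 0" for z
    using p simple_zeros that by (intro lhospital_quotient_mult_periodic[OF hol _ e Fp Gp]) auto
  ultimately have "?h x = ?h y"
    using mult_periodic_holomorphic_const[OF p, of ?h] \<open>x \<noteq> 0\<close> y(1) by metis
  also have "?h y = 0" using y by (simp add: lhospital_quotient_def)
  finally show ?thesis using simple_zeros[OF \<open>x \<noteq> 0\<close>] by (auto simp: lhospital_quotient_def split: if_splits)
qed

section \<open>Weierstrass' addition formula\<close>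

lemma theta_pair_simple_zero:
  assumes p: "norm p < 1" "p \<noteq> 0" and u: "u \<noteq> 0" "\<And>j::int. u ^ 2 \<noteq> p powi j"
    and x0: "x0 = u * p powi k"
  shows "\<exists>K. K holomorphic_on -{0} \<and> K x0 \<noteq> 0 \<and>
            (\<forall>x\<in>-{0}. theta (x / u) p * theta (x * u) p = (x - x0) * K x)"
proof -
  obtain c l where cl: "c \<noteq> 0" "\<And>z. z \<noteq> 0 \<Longrightarrow> theta (p powi k * z) p = c * z powi l * theta z p"
    using theta_mult_p_powi[OF p] by blast
  have x0nz: "x0 \<noteq> 0" using x0 u p by simp
  define Q where "Q = (\<lambda>x. qpoch_inf (x / x0 * p) p * qpoch_inf (p / (x / x0)) p)"
  define K where "K = (\<lambda>x. - (c / x0) * (x / x0) powi l * Q x * theta (x * u) p)"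
  have "K holomorphic_on -{0}"
    unfolding K_def Q_def using x0nz u
    by (intro holomorphic_intros holomorphic_on_qpoch_inf holomorphic_on_theta p) auto
  moreover have "K x0 \<noteq> 0"
  proof -
    have "theta (x0 * u) p \<noteq> 0"
    proof (rule theta_nonzero[OF p(1)])
      show "x0 * u \<noteq> 0" using x0nz u by simp
      fix j :: int
      show "x0 * u \<noteq> p powi j"
      proof
        assume "x0 * u = p powi j"
        hence "u ^ 2 = p powi (j - k)"
          using x0 p by (simp add: power_int_diff power2_eq_square field_simps)
        thus False using u(2) by blast
      qed
    qed
    thus ?thesis using cl(1) x0nz qpoch_inf_p_nonzero[OF p(1)] unfolding K_def Q_def by simp
  qed
  moreover have "theta (x / u) p * theta (x * u) p = (x - x0) * K x" if "x \<in> -{0}" for x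
  proof -
    have "x / u = p powi k * (x / x0)" using x0 u p x0nz by (simp add: field_simps)
    hence "theta (x / u) p = c * (x / x0) powi l * theta (x / x0) p"
      using cl(2)[of "x / x0"] that x0nz by simp
    also have "theta (x / x0) p = (1 - x / x0) * Q x"
      unfolding Q_def by (rule theta_factor[OF p(1)])
    finally have "theta (x / u) p * theta (x * u) p
        = c * (x / x0) powi l * ((1 - x / x0) * Q x) * theta (x * u) p" by simp
    also have "\<dots> = (x - x0) * K x" unfolding K_def using x0nz by (simp add: field_simps)
    finally show ?thesis .
  qed
  ultimately show ?thesis by blast
qed

definition theta_addition_defect :: "complex \<Rightarrow> complex \<Rightarrow> complex \<Rightarrow> complex \<Rightarrow> complex \<Rightarrow> complex"
  where "theta_addition_defect p y u v x =
     theta (x * y) p * theta (x / y) p * (theta (u * v) p * theta (u / v) p)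
     - theta (x * v) p * theta (x / v) p * (theta (u * y) p * theta (u / y) p)
     - (u / y) * theta (y * v) p * theta (y / v) p * (theta (x * u) p * theta (x / u) p)"

lemma holomorphic_on_theta_addition_defect:
  assumes "norm p < 1" "p \<noteq> 0" "y \<noteq> 0" "u \<noteq> 0" "v \<noteq> 0"
  shows "theta_addition_defect p y u v holomorphic_on -{0}"
  unfolding theta_addition_defect_def[abs_def]
  using assms by (intro holomorphic_intros holomorphic_on_theta) auto

lemma theta_addition_defect_mult_p:
  assumes p: "norm p < 1" "p \<noteq> 0" and "y \<noteq> 0" "u \<noteq> 0" "v \<noteq> 0" "x \<noteq> 0"
  shows "theta_addition_defect p y u v (p * x) = (1 / x ^ 2) * theta_addition_defect p y u v x"
proof -
  note pair = theta_pair_mult_p[OF p \<open>x \<noteq> 0\<close>]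
  show ?thesis unfolding theta_addition_defect_def
    by (simp only: pair[OF \<open>y \<noteq> 0\<close>] pair[OF \<open>v \<noteq> 0\<close>] pair[OF \<open>u \<noteq> 0\<close>]) (simp add: algebra_simps)
qed

lemma theta_addition_defect_at_u:
  assumes "norm p < 1" "u \<noteq> 0"
  shows "theta_addition_defect p y u v u = 0"
  using assms theta_1 by (simp add: theta_addition_defect_def)

lemma theta_addition_defect_at_inverse_u:
  assumes p: "norm p < 1" and nz: "y \<noteq> 0" "u \<noteq> 0" "v \<noteq> 0"
  shows "theta_addition_defect p y u v (1 / u) = 0"
proof -
  have inv: "theta (1 / u / y) p = - (1 / (u * y)) * theta (u * y) p"
      "theta (1 / u / v) p = - (1 / (u * v)) * theta (u * v) p"
      "theta (u / v) p = - (u / v) * theta (v / u) p"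
      "theta (u / y) p = - (u / y) * theta (y / u) p"
    using theta_inverse[OF p, of "u * y"] theta_inverse[OF p, of "u * v"]
      theta_inverse[OF p, of "v / u"] theta_inverse[OF p, of "y / u"] nz by simp_all
  have "theta_addition_defect p y u v (1 / u) =
      theta (y / u) p * (- (1 / (u * y)) * theta (u * y) p) * (theta (u * v) p * (- (u / v) * theta (v / u) p))
    - theta (v / u) p * (- (1 / (u * v)) * theta (u * v) p) * (theta (u * y) p * (- (u / y) * theta (y / u) p))"
    unfolding theta_addition_defect_def inv using nz theta_1[OF p] by simp
  also have "\<dots> = 0" using nz by (simp add: field_simps)
  finally show ?thesis .
qed

lemma theta_addition_defect_at_y:
  assumes p: "norm p < 1" and nz: "y \<noteq> 0" "u \<noteq> 0"
  shows "theta_addition_defect p y u v y = 0"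
proof -
  have "theta (u / y) p = - (u / y) * theta (y / u) p"
    using theta_inverse[OF p, of "y / u"] nz by simp
  thus ?thesis using nz theta_1[OF p] by (simp add: theta_addition_defect_def algebra_simps)
qed

lemma theta_addition_generic:
  assumes p: "norm p < 1" "p \<noteq> 0" and nz: "y \<noteq> 0" "u \<noteq> 0" "v \<noteq> 0" "x \<noteq> 0"
    and u: "\<And>j::int. u ^ 2 \<noteq> p powi j" and yu: "theta (y * u) p \<noteq> 0" "theta (y / u) p \<noteq> 0"
  shows "theta_addition_defect p y u v x = 0"
proof -
  define F where "F = theta_addition_defect p y u v"
  define G where "G = (\<lambda>x. theta (x / u) p * theta (x * u) p)"
  have F_orbit: "F (p powi k * w) = 0" if "w \<noteq> 0" "F w = 0" for k w
    using mult_periodic_powi[where h = "\<lambda>z. F z = 0", OF p(2) _ \<open>w \<noteq> 0\<close>] that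
      theta_addition_defect_mult_p[OF p nz(1-3)] by (simp add: F_def)
  have simple_zeros: "F x0 = 0 \<and> (\<exists>K. K holomorphic_on -{0} \<and> K x0 \<noteq> 0 \<and> (\<forall>x\<in>-{0}. G x = (x - x0) * K x))"
    if x0nz: "x0 \<noteq> 0" and "G x0 = 0" for x0
  proof -
    have "theta (x0 / u) p = 0 \<or> theta (x0 * u) p = 0" using that by (simp add: G_def)
    then obtain k where "x0 / u = p powi k \<or> x0 * u = p powi k"
      using theta_nonzero[OF p(1), of "x0 / u"] theta_nonzero[OF p(1), of "x0 * u"] x0nz nz by auto
    hence "x0 = u * p powi k \<or> x0 = (1 / u) * p powi k"
      using nz by (auto simp: field_simps)
    thus ?thesis
    proof
      assume x0: "x0 = u * p powi k"
      have "F x0 = 0"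
        using F_orbit[of u k] theta_addition_defect_at_u[OF p(1) nz(2)] nz x0 by (simp add: F_def mult.commute)
      thus ?thesis using theta_pair_simple_zero[OF p nz(2) u x0] by (simp add: G_def)
    next
      assume x0: "x0 = (1 / u) * p powi k"
      have "F x0 = 0"
        using F_orbit[of "1 / u" k] theta_addition_defect_at_inverse_u[OF p(1) nz(1-3)] nz x0
        by (simp add: F_def mult.commute)
      moreover have "(1 / u) ^ 2 \<noteq> p powi j" for j :: int
        using u[of "- j"] nz p by (auto simp: power_int_minus field_simps)
      ultimately show ?thesis
        using theta_pair_simple_zero[OF p _ _ x0] nz by (simp add: G_def mult.commute)
    qed
  qed
  have "F holomorphic_on -{0}"
    unfolding F_def by (rule holomorphic_on_theta_addition_defect) (use p nz in auto)
  moreover have "G holomorphic_on -{0}"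
    unfolding G_def using p nz by (intro holomorphic_intros holomorphic_on_theta) auto
  moreover have "(\<lambda>z::complex. 1 / z ^ 2) holomorphic_on -{0}" by (intro holomorphic_intros) auto
  moreover have "F (p * z) = 1 / z ^ 2 * F z" if "z \<noteq> 0" for z
    unfolding F_def by (rule theta_addition_defect_mult_p) (use p nz that in auto)
  moreover have "G (p * z) = 1 / z ^ 2 * G z" if "z \<noteq> 0" for z
    using theta_pair_mult_p[OF p that nz(2)] by (simp add: G_def mult_ac)
  moreover have "F y = 0" unfolding F_def by (rule theta_addition_defect_at_y) (use p nz in auto)
  moreover have "G y \<noteq> 0" using yu by (simp add: G_def)
  ultimately have "F x = 0"
    using quasi_periodic_eq_0[of p F G "\<lambda>z. 1 / z ^ 2" y x] p nz simple_zeros by auto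
  thus ?thesis by (simp add: F_def)
qed

theorem theta_addition:
  assumes p: "norm p < 1" and nz: "x \<noteq> 0" "y \<noteq> 0" "u \<noteq> 0" "v \<noteq> 0"
  shows "theta (x * y) p * theta (x / y) p * theta (u * v) p * theta (u / v) p
       - theta (x * v) p * theta (x / v) p * theta (u * y) p * theta (u / y) p
       = (u / y) * theta (y * v) p * theta (y / v) p * theta (x * u) p * theta (x / u) p"
proof (cases "p = 0")
  case True
  thus ?thesis using nz by (simp add: theta_0 field_simps)
next
  case False
  let ?\<Phi> = "\<lambda>w. theta_addition_defect p y w v x"
  text \<open>The generic case covers all \<open>w\<close> outside a countable set; by continuity in \<open>w\<close> it
    extends to \<open>w = u\<close>.\<close>
  define B where "B = {0} \<union> (\<Union>j::int. {w::complex. w ^ 2 = p powi j} \<union> {p powi j / y} \<union> {y / p powi j})"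
  have "countable B" unfolding B_def
    by (intro countable_Un countable_UN countable_insert countable_finite[OF finite_nth_roots]) auto
  have generic: "?\<Phi> w = 0" if "w \<notin> B" for w
  proof (rule theta_addition_generic[OF p False nz(2) _ nz(4,1)])
    show w: "w \<noteq> 0" "\<And>j. w ^ 2 \<noteq> p powi j" using that by (auto simp: B_def)
    show "theta (y * w) p \<noteq> 0"
    proof (rule theta_nonzero[OF p])
      show "y * w \<noteq> 0" using w nz by simp
      fix j :: int
      have "w \<noteq> p powi j / y" using that by (auto simp: B_def)
      thus "y * w \<noteq> p powi j" using nz by (auto simp: field_simps)
    qed
    show "theta (y / w) p \<noteq> 0"
    proof (rule theta_nonzero[OF p])
      show "y / w \<noteq> 0" using w nz by simp
      fix j :: int
      have "w \<noteq> y / p powi j" using that by (auto simp: B_def)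
      thus "y / w \<noteq> p powi j" using nz w False by (auto simp: field_simps)
    qed
  qed
  have "continuous (at u) ?\<Phi>"
  proof -
    have "?\<Phi> holomorphic_on -{0}" unfolding theta_addition_defect_def
      using nz p False by (intro holomorphic_intros holomorphic_on_theta) auto
    thus ?thesis using nz continuous_on_eq_continuous_at holomorphic_on_imp_continuous_on by blast
  qed
  have "?\<Phi> u = 0"
  proof (rule ccontr)
    assume "?\<Phi> u \<noteq> 0"
    then obtain e where e: "e > 0" "\<And>w. dist u w < e \<Longrightarrow> ?\<Phi> w \<noteq> 0"
      using continuous_at_avoid[OF \<open>continuous (at u) ?\<Phi>\<close>] by blast
    have "\<not> ball u e \<subseteq> B"
      using uncountable_ball[OF e(1)] \<open>countable B\<close> countable_subset by blast
    then obtain w where "w \<in> ball u e" "w \<notin> B" by blast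
    thus False using e(2)[of w] generic[of w] by simp
  qed
  thus ?thesis by (simp add: theta_addition_defect_def mult_ac)
qed

lemma theta_three_term:
  assumes p: "norm p < 1" and nz: "a \<noteq> 0" "b \<noteq> 0" "c \<noteq> 0" "R \<noteq> 0" "Q \<noteq> 0"
  shows "theta (a * R) p * theta (b * R) p * theta (c * Q) p * theta (a / (b * c) * Q) p =
         theta Q p * theta (a * Q / b) p * theta (a * R / c) p * theta (b * c * R) p
         + Q * theta c p * theta (a / (b * c)) p * theta (a * R * Q) p * theta (b * R / Q) p"
proof -
  define s where "s = csqrt (a / b)"
  have a: "a = b * s * s"
    using nz by (simp add: s_def mult.assoc flip: power2_eq_square)
  have s0: "s \<noteq> 0" using a nz by auto
  define x u v where "x = R * b * s" and "u = Q * s" and "v = c / s"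
  have x0: "x \<noteq> 0" "u \<noteq> 0" "v \<noteq> 0" using nz s0 by (auto simp: x_def u_def v_def)
  have subst: "x * s = a * R" "x / s = b * R" "u * v = c * Q" "u / v = a / (b * c) * Q"
      "x * v = b * c * R" "x / v = a * R / c" "u * s = a * Q / b" "u / s = Q" "s * v = c"
      "s / v = a / (b * c)" "x * u = a * R * Q" "x / u = b * R / Q"
    unfolding x_def u_def v_def a using nz s0 by (simp_all add: field_simps)
  from theta_addition[OF p x0(1) s0 x0(2,3)] show ?thesis
    unfolding subst by (simp add: algebra_simps)
qed

section \<open>Elliptic shifted factorials\<close>

definition epoch_nat :: "complex \<Rightarrow> complex \<Rightarrow> complex \<Rightarrow> nat \<Rightarrow> complex" where
  "epoch_nat x q p k = (\<Prod>i<k. theta (x * q ^ i) p)"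

lemma epoch_nat_0 [simp]: "epoch_nat x q p 0 = 1"
  by (simp add: epoch_nat_def)

lemma epoch_nat_Suc: "epoch_nat x q p (Suc k) = epoch_nat x q p k * theta (x * q ^ k) p"
  by (simp add: epoch_nat_def)

lemma epoch_nat_Suc_shift: "epoch_nat x q p (Suc k) = theta x p * epoch_nat (x * q) q p k"
  unfolding epoch_nat_def prod.lessThan_Suc_shift by (simp add: mult.assoc)

lemma epoch_of_nat: "epoch x q p (int k) = epoch_nat x q p k"
  by (simp add: epoch_def epoch_nat_def)

lemma epoch_nonpos:
  "n \<le> 0 \<Longrightarrow> epoch x q p n = 1 / (\<Prod>k<nat (- n). theta (x * q powi (n + int k)) p)"
  by (cases "n = 0") (auto simp: epoch_def)

lemma epoch_neg_prod_split:
  assumes "n < 0"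
  shows "(\<Prod>k<nat (- n). theta (x * q powi (n + int k)) p)
       = theta (x * q powi n) p * (\<Prod>k<nat (- (n + 1)). theta (x * q powi (n + 1 + int k)) p)"
proof -
  define M where "M = nat (- (n + 1))"
  have "nat (- n) = Suc M" using assms by (simp add: M_def)
  thus ?thesis unfolding M_def[symmetric] by (simp only: prod.lessThan_Suc_shift) (simp add: add_ac)
qed

lemma epoch_defined_if_nonzero: "epoch x q p n \<noteq> 0 \<Longrightarrow> epoch_defined x q p n"
  by (auto simp: epoch_def epoch_defined_def)

lemma epoch_defined_plus_1: "epoch_defined x q p n \<Longrightarrow> epoch_defined x q p (n + 1)"
  using epoch_neg_prod_split[of n x q p] by (auto simp: epoch_defined_def)

lemma epoch_defined_add: "epoch_defined x q p n \<Longrightarrow> epoch_defined x q p (n + int k)"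
proof (induction k)
  case (Suc k)
  thus ?case using epoch_defined_plus_1[of x q p "n + int k"] by (simp add: add_ac)
qed simp

lemma epoch_plus_1:
  assumes "q \<noteq> 0" "epoch_defined x q p n"
  shows "epoch x q p (n + 1) = epoch x q p n * theta (x * q powi n) p"
proof (cases "0 \<le> n")
  case True
  have "nat (n + 1) = Suc (nat n)" "q powi n = q ^ nat n" using True by (simp_all add: power_int_def)
  thus ?thesis using True by (simp add: epoch_def)
next
  case False
  define P where "P = (\<Prod>k<nat (- (n + 1)). theta (x * q powi (n + 1 + int k)) p)"
  have split: "(\<Prod>k<nat (- n). theta (x * q powi (n + int k)) p) = theta (x * q powi n) p * P"
    unfolding P_def using False by (intro epoch_neg_prod_split) simp
  hence "theta (x * q powi n) p \<noteq> 0" using assms(2) False by (auto simp: epoch_defined_def)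
  moreover have "epoch x q p (n + 1) = 1 / P" unfolding P_def using False by (intro epoch_nonpos) simp
  moreover have "epoch x q p n = 1 / (theta (x * q powi n) p * P)"
    using False by (simp add: epoch_nonpos split)
  ultimately show ?thesis by simp
qed

lemma epoch_add_nat:
  assumes "q \<noteq> 0" "epoch_defined x q p m"
  shows "epoch x q p (m + int k) = epoch x q p m * epoch_nat (x * q powi m) q p k"
proof (induction k)
  case (Suc k)
  have "epoch x q p (m + int (Suc k)) = epoch x q p (m + int k + 1)" by (simp add: add_ac)
  also have "\<dots> = epoch x q p (m + int k) * theta (x * q powi (m + int k)) p"
    by (rule epoch_plus_1[OF assms(1) epoch_defined_add[OF assms(2)]])
  also have "x * q powi (m + int k) = x * q powi m * q ^ k"
    using assms(1) by (simp add: power_int_add mult_ac)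
  finally show ?case using Suc by (simp add: epoch_nat_Suc mult_ac)
qed simp

definition reversal_factor :: "complex \<Rightarrow> complex \<Rightarrow> nat \<Rightarrow> nat \<Rightarrow> complex" where
  "reversal_factor x q N k = (\<Prod>i<k. - (x * q ^ (N - 1 - i)))"

text \<open>Reading the last \<open>k\<close> factors of \<open>(x;q,p)\<^sub>N\<close> backwards, via \<open>\<theta>(z) = -z \<theta>(1/z)\<close>.\<close>
lemma epoch_nat_reverse:
  assumes p: "norm p < 1" and nz: "x \<noteq> 0" "q \<noteq> 0" and "k \<le> N"
  shows "epoch_nat x q p N =
    epoch_nat x q p (N - k) * (reversal_factor x q N k * epoch_nat (q powi (1 - int N) / x) q p k)"
  using \<open>k \<le> N\<close>
proof (induction k)
  case (Suc k)
  define z where "z = x * q ^ (N - Suc k)"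
  define y where "y = q powi (1 - int N) / x"
  have "z = 1 / (y * q ^ k)"
  proof -
    have "q powi (1 - int N) * q ^ k * q ^ (N - Suc k) = q powi (1 - int N + int k + int (N - Suc k))"
      using nz by (simp add: power_int_add)
    also have "1 - int N + int k + int (N - Suc k) = 0" using Suc.prems by simp
    finally show ?thesis using nz unfolding z_def y_def by (simp add: field_simps)
  qed
  hence "theta z p = - z * theta (y * q ^ k) p"
    using theta_inverse[OF p, of "y * q ^ k"] nz by (simp add: y_def)
  moreover have "epoch_nat x q p (N - k) = epoch_nat x q p (N - Suc k) * theta z p"
    using Suc.prems by (simp add: z_def epoch_nat_Suc flip: Suc_diff_Suc)
  moreover have "reversal_factor x q N (Suc k) = reversal_factor x q N k * (- z)"
    by (simp add: reversal_factor_def z_def)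
  ultimately show ?case
    using Suc by (simp add: y_def[symmetric] epoch_nat_Suc mult_ac)
qed (simp add: reversal_factor_def)

lemma epoch_nat_eq_0: "norm p < 1 \<Longrightarrow> i < N \<Longrightarrow> x * q ^ i = 1 \<Longrightarrow> epoch_nat x q p N = 0"
  using theta_1 by (force simp: epoch_nat_def prod_zero_iff)

section \<open>The elliptic bibasic summation\<close>

definition bibasic_denom :: "complex \<Rightarrow> complex \<Rightarrow> complex \<Rightarrow> complex \<Rightarrow> complex \<Rightarrow> complex \<Rightarrow> nat \<Rightarrow> complex"
  where "bibasic_denom a b c q r p k =
    epoch_nat q q p k * epoch_nat (a * q / b) q p k * epoch_nat (a * r / c) r p k * epoch_nat (b * c * r) r p k"

definition bibasic_term :: "complex \<Rightarrow> complex \<Rightarrow> complex \<Rightarrow> complex \<Rightarrow> complex \<Rightarrow> complex \<Rightarrow> nat \<Rightarrow> complex"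
  where "bibasic_term a b c q r p k =
    theta (a * r ^ k * q ^ k) p * theta (b * r ^ k / q ^ k) p * epoch_nat a r p k * epoch_nat b r p k
      * epoch_nat c q p k * epoch_nat (a / (b * c)) q p k * q ^ k / bibasic_denom a b c q r p k"

text \<open>An elliptic analogue of Gasper's bibasic summation, with the factor \<open>theta a p * theta b p\<close>
  multiplied through so that no division by it is needed.  Each induction step is one instance of
  the three-term identity.\<close>
theorem bibasic_theta_sum:
  assumes p: "norm p < 1" and nz: "a \<noteq> 0" "b \<noteq> 0" "c \<noteq> 0" "q \<noteq> 0" "r \<noteq> 0"
    and denom: "\<And>k. k \<le> n \<Longrightarrow> bibasic_denom a b c q r p k \<noteq> 0"
  shows "(\<Sum>k\<le>n. bibasic_term a b c q r p k) =
    epoch_nat a r p (Suc n) * epoch_nat b r p (Suc n) * epoch_nat (c * q) q p n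
      * epoch_nat (a / (b * c) * q) q p n / bibasic_denom a b c q r p n"
  using denom
proof (induction n)
  case 0
  show ?case by (simp add: bibasic_term_def bibasic_denom_def epoch_nat_def)
next
  case (Suc n)
  define R where "R = r ^ Suc n"
  define Q where "Q = q ^ Suc n"
  have R0: "R \<noteq> 0" and Q0: "Q \<noteq> 0" using nz by (auto simp: R_def Q_def)
  define D where "D = bibasic_denom a b c q r p n"
  define N where "N = epoch_nat a r p (Suc n) * epoch_nat b r p (Suc n) * epoch_nat (c * q) q p n
      * epoch_nat (a / (b * c) * q) q p n"
  define \<delta> where "\<delta> = theta Q p * theta (a * Q / b) p * theta (a * R / c) p * theta (b * c * R) p"
  have D_Suc: "bibasic_denom a b c q r p (Suc n) = D * \<delta>"
  proof -
    have "q * q ^ n = Q" "a * q / b * q ^ n = a * Q / b" "a * r / c * r ^ n = a * R / c"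
         "b * c * r * r ^ n = b * c * R"
      by (simp_all add: Q_def R_def)
    thus ?thesis unfolding bibasic_denom_def D_def \<delta>_def epoch_nat_Suc by (simp only: mult_ac)
  qed
  have N_Suc: "epoch_nat a r p (Suc (Suc n)) * epoch_nat b r p (Suc (Suc n)) * epoch_nat (c * q) q p (Suc n)
      * epoch_nat (a / (b * c) * q) q p (Suc n)
    = N * (theta (a * R) p * theta (b * R) p * theta (c * Q) p * theta (a / (b * c) * Q) p)"
  proof -
    have "c * q * q ^ n = c * Q" "a / (b * c) * q * q ^ n = a / (b * c) * Q"
         "a * r ^ Suc n = a * R" "b * r ^ Suc n = b * R"
      by (simp_all add: Q_def R_def)
    thus ?thesis unfolding N_def epoch_nat_Suc[of _ _ _ "Suc n"] epoch_nat_Suc[of _ _ _ n]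
      by (simp only: mult_ac)
  qed
  have term_Suc: "bibasic_term a b c q r p (Suc n) =
      N * (Q * theta c p * theta (a / (b * c)) p * theta (a * R * Q) p * theta (b * R / Q) p) / (D * \<delta>)"
    unfolding bibasic_term_def D_Suc N_def R_def[symmetric] Q_def[symmetric]
      epoch_nat_Suc_shift[of c] epoch_nat_Suc_shift[of "a / (b * c)"]
    by (simp only: mult_ac)
  have "D \<noteq> 0" "\<delta> \<noteq> 0" using Suc.prems D_Suc by (auto simp: D_def)
  have "(\<Sum>k\<le>Suc n. bibasic_term a b c q r p k) = N / D + bibasic_term a b c q r p (Suc n)"
    using Suc by (simp add: N_def D_def)
  also have "\<dots> = N * (theta (a * R) p * theta (b * R) p * theta (c * Q) p * theta (a / (b * c) * Q) p) / (D * \<delta>)"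
    unfolding term_Suc theta_three_term[OF p nz(1-3) R0 Q0] \<delta>_def[symmetric]
    using \<open>D \<noteq> 0\<close> \<open>\<delta> \<noteq> 0\<close> by (simp add: field_simps)
  finally show ?case unfolding N_Suc D_Suc .
qed

section \<open>The inversion\<close>

lemma minus_one_powi_add_self: "(-1 :: complex) powi (n + n) = 1"
proof -
  have "(-1 :: complex) powi (n + n) = ((-1) * (-1)) powi n"
    by (simp add: power_int_add power_int_mult_distrib)
  thus ?thesis by simp
qed

lemma coeffB_diagonal: "coeffB a b q r p j j = 1"
  by (simp add: coeffB_def epoch_def binomial_eq_0)

locale elliptic_matrix_inversion =
  fixes a b q r p :: complex and m n :: int
  assumes p: "norm p < 1"
    and nonzero: "a \<noteq> 0" "b \<noteq> 0" "q \<noteq> 0" "r \<noteq> 0"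
    and m_le_n: "m \<le> n"
    and defined: "epoch_defined (a * r * q powi n) r p (n - 1)"
      "epoch_defined (b * r * q powi (- n)) r p (n - 1)"
    and denomA: "\<And>j. m \<le> j \<Longrightarrow> j \<le> n \<Longrightarrow>
      epoch q q p (n - j) * epoch (a * r * q powi n) r p j * epoch (b * r * q powi (- n)) r p j
        * epoch (b * q powi (1 - 2 * n) / a) q p (n - j) \<noteq> 0"
    and denomB: "\<And>j. m \<le> j \<Longrightarrow> j \<le> n \<Longrightarrow>
      epoch q q p (j - m) * epoch (a * q powi (1 + 2 * m) / b) q p (j - m) \<noteq> 0"
begin

definition "U = a * r * q powi n"
definition "V = b * r * q powi (- n)"
definition "Y = b * q powi (1 - 2 * n) / a"

lemma coeffA_diagonal: "coeffA a b q r p n n = 1"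
proof -
  have "U * r powi (n - 1) = a * r powi n * q powi n" "V * r powi (n - 1) = b * r powi n * q powi (- n)"
    using nonzero by (simp_all add: U_def V_def power_int_diff field_simps)
  moreover have "epoch U r p n = epoch U r p (n - 1) * theta (U * r powi (n - 1)) p"
    "epoch V r p n = epoch V r p (n - 1) * theta (V * r powi (n - 1)) p"
    using epoch_plus_1[OF nonzero(4) defined(1)] epoch_plus_1[OF nonzero(4) defined(2)]
    by (simp_all add: U_def V_def)
  ultimately have "epoch U r p n = epoch U r p (n - 1) * theta (a * r powi n * q powi n) p"
    "epoch V r p n = epoch V r p (n - 1) * theta (b * r powi n * q powi (- n)) p"
    by simp_all
  moreover have "epoch U r p n * epoch V r p n \<noteq> 0"
    using denomA[of n] m_le_n by (simp add: U_def V_def)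
  ultimately show ?thesis
    by (simp add: coeffA_def minus_one_powi_add_self epoch_def flip: U_def V_def)
qed

definition "N = nat (n - m)"
definition "A = a * r powi m * q powi m"
definition "B = b * r powi m * q powi (- m)"
definition "C = q powi (- int N)"

lemma int_N: "int N = n - m"
  using m_le_n by (simp add: N_def)

lemma ABC_nonzero: "A \<noteq> 0" "B \<noteq> 0" "C \<noteq> 0"
  using nonzero by (auto simp: A_def B_def C_def)

lemma epoch_U_shift: "epoch U r p (m + int k) = epoch U r p m * epoch_nat (A * r / C) r p k"
proof -
  have "q powi n = q powi m * q powi int N"
    using nonzero(3) int_N by (simp flip: power_int_add)
  hence "U * r powi m = A * r / C"
    using nonzero by (simp add: U_def A_def C_def power_int_minus field_simps)
  moreover have "epoch_defined U r p m"
    using denomA[of m] m_le_n by (intro epoch_defined_if_nonzero) (simp add: U_def)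
  ultimately show ?thesis using epoch_add_nat[OF nonzero(4)] by simp
qed

lemma epoch_V_shift: "epoch V r p (m + int k) = epoch V r p m * epoch_nat (B * C * r) r p k"
proof -
  have "q powi (- n) = q powi (- m) * q powi (- int N)"
    using nonzero(3) int_N by (simp flip: power_int_add)
  hence "V * r powi m = B * C * r"
    using nonzero by (simp add: V_def B_def C_def mult_ac)
  moreover have "epoch_defined V r p m"
    using denomA[of m] m_le_n by (intro epoch_defined_if_nonzero) (simp add: V_def)
  ultimately show ?thesis using epoch_add_nat[OF nonzero(4)] by simp
qed

lemma epoch_nat_reverse_q:
  assumes "k \<le> N"
  shows "epoch_nat q q p (N - k) = epoch_nat q q p N / (reversal_factor q q N k * epoch_nat C q p k)"
proof -
  have "q powi (1 - int N) / q = C"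
    using nonzero(3) by (simp add: C_def power_int_diff power_int_minus divide_inverse)
  hence "epoch_nat q q p N = epoch_nat q q p (N - k) * (reversal_factor q q N k * epoch_nat C q p k)"
    using epoch_nat_reverse[OF p nonzero(3,3) assms] by simp
  moreover have "epoch_nat q q p N \<noteq> 0"
    using denomA[of m] m_le_n by (simp add: int_N[symmetric] epoch_of_nat)
  ultimately show ?thesis by (simp add: nonzero_eq_divide_eq)
qed

lemma epoch_nat_reverse_Y:
  assumes "k \<le> N"
  shows "epoch_nat Y q p (N - k) = epoch_nat Y q p N / (reversal_factor Y q N k * epoch_nat (A / (B * C)) q p k)"
proof -
  have "q powi (1 - int N) * q powi (2 * n - 1) = q powi (2 * m) * q powi (int N)"
    using nonzero(3) int_N by (simp add: add.commute flip: power_int_add)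
  moreover have "q powi m * q powi m = q powi (m * 2)"
    using nonzero(3) by (simp add: mult_2_right flip: power_int_add)
  ultimately have "q powi (1 - int N) / Y = A / (B * C)"
    using nonzero by (simp add: Y_def A_def B_def C_def power_int_minus power_int_diff power_int_add
        field_simps)
  hence "epoch_nat Y q p N = epoch_nat Y q p (N - k) * (reversal_factor Y q N k * epoch_nat (A / (B * C)) q p k)"
    using epoch_nat_reverse[OF p _ nonzero(3) assms, of Y] nonzero by (simp add: Y_def)
  moreover have "epoch_nat Y q p N \<noteq> 0"
    using denomA[of m] m_le_n by (simp add: int_N[symmetric] epoch_of_nat Y_def)
  ultimately show ?thesis by (simp add: nonzero_eq_divide_eq)
qed

definition "common_factor = (-1) powi (n + m) * epoch U r p (n - 1) * epoch V r p (n - 1)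
  / (epoch U r p m * epoch V r p m * epoch_nat q q p N * epoch_nat Y q p N)"

lemma coeffA_shifted:
  assumes "k \<le> N"
  shows "coeffA a b q r p n (m + int k) = common_factor *
    ((-1) ^ k * theta (A * r ^ k * q ^ k) p * theta (B * r ^ k / q ^ k) p
      * reversal_factor q q N k * epoch_nat C q p k * reversal_factor Y q N k * epoch_nat (A / (B * C)) q p k
      / (epoch_nat (A * r / C) r p k * epoch_nat (B * C * r) r p k))"
proof -
  have nk: "n - (m + int k) = int (N - k)" using assms int_N by simp
  have sign: "(-1 :: complex) powi (n + (m + int k)) = (-1) powi (n + m) * (-1) ^ k"
    by (simp add: power_int_add add.assoc)
  have rmk: "r powi (m + int k) = r powi m * r ^ k" and qmk: "q powi (m + int k) = q powi m * q ^ k"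
    using nonzero by (simp_all add: power_int_add)
  have "a * r powi (m + int k) * q powi (m + int k) = A * r ^ k * q ^ k"
    unfolding rmk qmk A_def by (simp add: mult_ac)
  moreover have "b * r powi (m + int k) * q powi (- (m + int k)) = B * r ^ k / q ^ k"
    unfolding rmk power_int_minus qmk B_def using nonzero by (simp add: field_simps)
  ultimately have "coeffA a b q r p n (m + int k) = (-1) powi (n + m) * (-1) ^ k
      * theta (A * r ^ k * q ^ k) p * theta (B * r ^ k / q ^ k) p * epoch U r p (n - 1) * epoch V r p (n - 1)
      / (epoch_nat q q p (N - k) * (epoch U r p m * epoch_nat (A * r / C) r p k)
         * (epoch V r p m * epoch_nat (B * C * r) r p k) * epoch_nat Y q p (N - k))"
    unfolding coeffA_def nk epoch_of_nat sign U_def[symmetric] V_def[symmetric] Y_def[symmetric]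
      epoch_U_shift epoch_V_shift by simp
  also have "\<dots> = common_factor *
    ((-1) ^ k * theta (A * r ^ k * q ^ k) p * theta (B * r ^ k / q ^ k) p
      * reversal_factor q q N k * epoch_nat C q p k * reversal_factor Y q N k * epoch_nat (A / (B * C)) q p k
      / (epoch_nat (A * r / C) r p k * epoch_nat (B * C * r) r p k))"
    unfolding epoch_nat_reverse_q[OF assms] epoch_nat_reverse_Y[OF assms] common_factor_def
    by (simp add: divide_inverse inverse_mult_distrib mult_ac)
  finally show ?thesis .
qed

lemma A_q_div_B: "A * q / B = a * q powi (1 + 2 * m) / b"
proof -
  have "q powi m * q powi m = q powi (m * 2)"
    using nonzero(3) by (simp add: mult_2_right flip: power_int_add)
  thus ?thesis using nonzero by (simp add: A_def B_def power_int_add power_int_minus field_simps)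
qed

lemma coeffB_shifted:
  "coeffB a b q r p (m + int k) m = (- (a / b) * q powi (1 + 2 * m)) ^ k * q ^ (2 * (k choose 2))
    * epoch_nat A r p k * epoch_nat B r p k / (epoch_nat q q p k * epoch_nat (A * q / B) q p k)"
  unfolding coeffB_def A_q_div_B A_def[symmetric] B_def[symmetric] by (simp add: epoch_of_nat mult_ac)

text \<open>The monomials produced by the two reversals and by \<open>b\<^sub>j\<^sub>m\<close> cancel up to \<open>q\<^sup>k\<close>.\<close>
lemma reversal_monomials:
  assumes "k \<le> N"
  shows "(-1) ^ k * (- (a / b) * q powi (1 + 2 * m)) ^ k * q ^ (2 * (k choose 2))
    * (reversal_factor q q N k * reversal_factor Y q N k) = q ^ k"
  using assms
proof (induction k)
  case (Suc k)
  define lam where "lam = - (a / b) * q powi (1 + 2 * m)"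
  define t where "t = N - 1 - k"
  have key: "(-1) * lam * q ^ (2 * k) * ((- (q * q ^ t)) * (- (Y * q ^ t))) = q"
  proof -
    have t: "int t = int N - 1 - int k" using Suc.prems by (simp add: t_def)
    have "(-1) * lam * q ^ (2 * k) * ((- (q * q ^ t)) * (- (Y * q ^ t)))
      = (a / b) * (b / a) * (q powi (1 + 2 * m) * q ^ (2 * k) * q * q ^ t * q powi (1 - 2 * n) * q ^ t)"
      by (simp add: lam_def Y_def field_simps)
    also have "q powi (1 + 2 * m) * q ^ (2 * k) * q * q ^ t * q powi (1 - 2 * n) * q ^ t =
        q powi ((1 + 2 * m) + int (2 * k) + 1 + int t + (1 - 2 * n) + int t)"
      unfolding power_int_add[OF disjI1[OF nonzero(3)]] power_int_of_nat by simp
    also have "(1 + 2 * m) + int (2 * k) + 1 + int t + (1 - 2 * n) + int t = 1"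
      using t int_N by simp
    finally show ?thesis using nonzero by simp
  qed
  have "Suc k choose 2 = (k choose 2) + k"
    by (simp add: numeral_2_eq_2 add.commute)
  moreover have "reversal_factor x q N (Suc k) = reversal_factor x q N k * (- (x * q ^ t))" for x
    by (simp add: reversal_factor_def t_def)
  ultimately have split: "(-1) ^ Suc k * lam ^ Suc k * q ^ (2 * (Suc k choose 2))
      * (reversal_factor q q N (Suc k) * reversal_factor Y q N (Suc k))
    = ((-1) ^ k * lam ^ k * q ^ (2 * (k choose 2)) * (reversal_factor q q N k * reversal_factor Y q N k))
      * ((-1) * lam * q ^ (2 * k) * ((- (q * q ^ t)) * (- (Y * q ^ t))))"
    by (simp add: power_add mult_ac)
  have IH: "(-1) ^ k * lam ^ k * q ^ (2 * (k choose 2)) * (reversal_factor q q N k * reversal_factor Y q N k)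
      = q ^ k"
    using Suc by (simp add: lam_def)
  show ?case unfolding lam_def[symmetric] split IH key by simp
qed (simp add: reversal_factor_def binomial_eq_0)

lemma coeff_product_shifted:
  assumes "k \<le> N"
  shows "coeffA a b q r p n (m + int k) * coeffB a b q r p (m + int k) m = common_factor * bibasic_term A B C q r p k"
proof -
  have "coeffA a b q r p n (m + int k) * coeffB a b q r p (m + int k) m = common_factor
    * (theta (A * r ^ k * q ^ k) p * theta (B * r ^ k / q ^ k) p * epoch_nat A r p k * epoch_nat B r p k
       * epoch_nat C q p k * epoch_nat (A / (B * C)) q p k
       * ((-1) ^ k * (- (a / b) * q powi (1 + 2 * m)) ^ k * q ^ (2 * (k choose 2))
          * (reversal_factor q q N k * reversal_factor Y q N k)))
    / (epoch_nat q q p k * epoch_nat (A * q / B) q p k * epoch_nat (A * r / C) r p k * epoch_nat (B * C * r) r p k)"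
    unfolding coeffA_shifted[OF assms] coeffB_shifted by (simp add: divide_inverse mult_ac)
  thus ?thesis
    unfolding reversal_monomials[OF assms] by (simp add: bibasic_term_def bibasic_denom_def)
qed

lemma bibasic_denom_nonzero:
  assumes "k \<le> N"
  shows "bibasic_denom A B C q r p k \<noteq> 0"
proof -
  have j: "m \<le> m + int k" "m + int k \<le> n" using assms int_N by auto
  have "epoch U r p (m + int k) * epoch V r p (m + int k) \<noteq> 0"
    using denomA[OF j] by (simp add: U_def V_def)
  hence "epoch_nat (A * r / C) r p k * epoch_nat (B * C * r) r p k \<noteq> 0"
    unfolding epoch_U_shift epoch_V_shift by simp
  moreover have "epoch_nat q q p k * epoch_nat (A * q / B) q p k \<noteq> 0"
    using denomB[OF j] by (simp add: A_q_div_B epoch_of_nat)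
  ultimately show ?thesis unfolding bibasic_denom_def by simp
qed

lemma sum_off_diagonal:
  assumes "m < n"
  shows "(\<Sum>j\<in>{m..n}. coeffA a b q r p n j * coeffB a b q r p j m) = 0"
proof -
  have "{m..n} = (\<lambda>k. m + int k) ` {..N}"
  proof
    show "{m..n} \<subseteq> (\<lambda>k. m + int k) ` {..N}"
    proof
      fix j assume "j \<in> {m..n}"
      hence "j = m + int (nat (j - m))" "nat (j - m) \<in> {..N}" using int_N by auto
      thus "j \<in> (\<lambda>k. m + int k) ` {..N}" by blast
    qed
  qed (use int_N in auto)
  hence "(\<Sum>j\<in>{m..n}. coeffA a b q r p n j * coeffB a b q r p j m)
      = (\<Sum>k\<le>N. coeffA a b q r p n (m + int k) * coeffB a b q r p (m + int k) m)"
    by (simp add: sum.reindex inj_on_def)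
  also have "\<dots> = common_factor * (\<Sum>k\<le>N. bibasic_term A B C q r p k)"
    by (simp add: coeff_product_shifted sum_distrib_left)
  also have "(\<Sum>k\<le>N. bibasic_term A B C q r p k) =
      epoch_nat A r p (Suc N) * epoch_nat B r p (Suc N) * epoch_nat (C * q) q p N
      * epoch_nat (A / (B * C) * q) q p N / bibasic_denom A B C q r p N"
    by (rule bibasic_theta_sum[OF p ABC_nonzero nonzero(3,4) bibasic_denom_nonzero])
  also have "epoch_nat (C * q) q p N = 0"
  proof (rule epoch_nat_eq_0[OF p])
    show "N - 1 < N" using assms int_N by linarith
    have "C * q * q ^ (N - 1) = C * q ^ N"
      using \<open>N - 1 < N\<close> by (metis Suc_pred' gr_zeroI less_nat_zero_code mult.assoc power_Suc)
    thus "C * q * q ^ (N - 1) = 1" using nonzero by (simp add: C_def power_int_minus)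
  qed
  finally show ?thesis by simp
qed

end

theorem mainTheorem8:
  fixes a b q r p :: complex and m n :: int
  assumes "norm p < 1"
    and "a \<noteq> 0" and "b \<noteq> 0" and "q \<noteq> 0" and "r \<noteq> 0"
    and "m \<le> n"
    and "epoch_defined (a * r * q powi n) r p (n - 1)"
    and "epoch_defined (b * r * q powi (- n)) r p (n - 1)"
    and "\<And>j. m \<le> j \<Longrightarrow> j \<le> n \<Longrightarrow>
           epoch q q p (n - j) * epoch (a * r * q powi n) r p j * epoch (b * r * q powi (- n)) r p j
             * epoch (b * q powi (1 - 2 * n) / a) q p (n - j) \<noteq> 0"
    and "\<And>j. m \<le> j \<Longrightarrow> j \<le> n \<Longrightarrow>
           epoch q q p (j - m) * epoch (a * q powi (1 + 2 * m) / b) q p (j - m) \<noteq> 0"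
  shows "(\<Sum>j\<in>{m..n}. coeffA a b q r p n j * coeffB a b q r p j m) = (if n = m then 1 else 0)"
proof -
  interpret elliptic_matrix_inversion a b q r p m n
    by (rule elliptic_matrix_inversion.intro) (fact assms)+
  show ?thesis
  proof (cases "n = m")
    case True
    thus ?thesis using coeffA_diagonal coeffB_diagonal by simp
  next
    case False
    thus ?thesis using sum_off_diagonal \<open>m \<le> n\<close> by simp
  qed
qed

end
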